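(* Let $\eta>0$ and let $p_\infty$ be the probability density $$p_\infty(x)=\frac{2^{2/\eta^2}\,\eta^{1-4/\eta^2}}{\Gamma(2/\eta^2)}\exp\!\Big(-\frac{2}{\eta^2}\frac{1}{1+\eta x}\Big)(1+\eta x)^{-2-2/\eta^2}\ \text{ for } x>-\tfrac1\eta,\qquad p_\infty(x)=0 \text{ for } x\le-\tfrac1\eta.$$ Then for a positive integer $k$, $\int_{\mathbb{R}}|x|^k p_\infty(x)\,\mathrm{d}x<\infty$ if and only if $\eta<\sqrt{2/(k-1)}$ (interpreted as always true for $k=1$). Moreover $\int_{\mathbb{R}}x\,p_\infty(x)\,\mathrm{d}x=0$, and if $\eta^2<2$ then $\int_{\mathbb{R}}x^2p_\infty(x)\,\mathrm{d}x=\dfrac{1}{2-\eta^2}$.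
   Context: $\Gamma$ denotes the Gamma function. The density $p_\infty$ is the stationary density of the SDE $\mathrm{d}x_t=-x_t\,\mathrm{d}t+(1+\eta x_t)\,\mathrm{d}W_t$. *)

theory Defs
  imports "HOL-Analysis.Analysis"
begin

text \<open>Stationary density of dx = -x dt + (1 + eta x) dW, for eta > 0.\<close>
definition p_inf :: "real \<Rightarrow> real \<Rightarrow> real" where
  "p_inf \<eta> x =
     (if x > - 1 / \<eta> then
        (2 powr (2 / \<eta>\<^sup>2) * \<eta> powr (1 - 4 / \<eta>\<^sup>2) / Gamma (2 / \<eta>\<^sup>2))
        * exp (- (2 / \<eta>\<^sup>2) * (1 / (1 + \<eta> * x)))
        * (1 + \<eta> * x) powr (- 2 - 2 / \<eta>\<^sup>2)
      else 0)"

end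

theory Submission
  imports Defs
begin

text \<open>With \<open>a = 2 / \<eta>\<^sup>2\<close>, the substitution \<open>u = a / (1 + \<eta> x)\<close> carries \<open>p_inf \<eta>\<close> to the
  Gamma density \<open>u powr a * exp (-u) / Gamma (a + 1)\<close> on \<open>{0<..}\<close> and \<open>x\<close> to \<open>(a - u) / (\<eta> u)\<close>.
  The \<open>k\<close>-th absolute moment thus becomes a multiple of the integral of
  \<open>\<bar>a - u\<bar> ^ k * u powr (a - k) * exp (-u)\<close>, which converges at infinity and, since the integrand
  is comparable to \<open>u powr (a - k)\<close> near \<open>0\<close>, converges iff \<open>a - k > -1\<close>, i.e. iff
  \<open>\<eta>\<^sup>2 (k - 1) < 2\<close>. The first two moments become combinations of Gamma integrals, evaluated
  with \<open>Gamma (s + 1) = s * Gamma s\<close>.\<close>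

lemma Gamma_integral_real':
  assumes "s > (0::real)"
  shows "((\<lambda>t. t powr (s - 1) * exp (-t)) has_integral Gamma s) {0<..}"
proof -
  have "((\<lambda>t. t powr (s - 1) * exp (-t)) has_integral Gamma s) {0..}"
    using Gamma_integral_real[OF assms] by (simp add: exp_minus field_simps)
  then show ?thesis
    by (rule has_integral_spike_set_eq[THEN iffD1, rotated 2]) (auto intro: negligible_subset[of "{}"])
qed

lemma absolutely_integrable_Gamma_integral_real:
  assumes "s > (0::real)"
  shows "(\<lambda>t. t powr (s - 1) * exp (-t)) absolutely_integrable_on {0<..}"
  using Gamma_integral_real'[OF assms]
  by (intro nonnegative_absolutely_integrable_1) (auto simp: has_integral_integrable)

lemma Gamma_real_plus1: "s > (0::real) \<Longrightarrow> Gamma (s + 1) = s * Gamma s"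
  by (rule Gamma_plus1) (auto elim!: nonpos_Ints_cases)

lemma integrable_lborel_iff_absolutely_integrable_on:
  fixes F :: "real \<Rightarrow> real"
  assumes "F \<in> borel_measurable borel" and "\<And>x. x \<notin> S \<Longrightarrow> F x = 0"
  shows "integrable lborel F \<longleftrightarrow> F absolutely_integrable_on S"
proof -
  have F: "F = (\<lambda>x. if x \<in> S then F x else 0)"
    using assms(2) by auto
  have "integrable lborel F \<longleftrightarrow> F absolutely_integrable_on UNIV"
    unfolding set_integrable_def using integrable_completion[of F lborel] assms(1) by simp
  also have "\<dots> \<longleftrightarrow> F absolutely_integrable_on S"
    by (subst F) (rule absolutely_integrable_restrict_UNIV)
  finally show ?thesis .
qed

lemma integral_lborel_eq_integral_on:
  fixes F :: "real \<Rightarrow> real"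
  assumes "integrable lborel F" and "\<And>x. x \<notin> S \<Longrightarrow> F x = 0"
  shows "(\<integral>x. F x \<partial>lborel) = integral S F"
proof -
  have F: "F = (\<lambda>x. if x \<in> S then F x else 0)"
    using assms(2) by auto
  have "(\<integral>x. F x \<partial>lborel) = integral UNIV F"
    using assms(1) by (simp add: integral_lborel)
  also have "\<dots> = integral S F"
    by (subst F) (rule integral_restrict_UNIV)
  finally show ?thesis .
qed

lemma
  fixes F :: "real \<Rightarrow> real" and \<eta> a :: real
  assumes \<eta>: "\<eta> > 0" and a: "a > 0" and F: "F \<in> borel_measurable borel"
    and F_zero: "\<And>x. x \<le> -1/\<eta> \<Longrightarrow> F x = 0"
  shows integrable_lborel_reciprocal_substitution:
      "integrable lborel F \<longleftrightarrow>
         (\<lambda>u. a / (\<eta> * u\<^sup>2) * F ((a/u - 1) / \<eta>)) absolutely_integrable_on {0<..}"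
    and integral_lborel_reciprocal_substitution:
      "integrable lborel F \<Longrightarrow>
         (\<integral>x. F x \<partial>lborel) = integral {0<..} (\<lambda>u. a / (\<eta> * u\<^sup>2) * F ((a/u - 1) / \<eta>))"
proof -
  define g where "g u = (a/u - 1) / \<eta>" for u
  let ?G = "\<lambda>u. a / (\<eta> * u\<^sup>2) * F (g u)"
  have "g ` {0<..} = {-1/\<eta><..}"
  proof (intro equalityI subsetI)
    fix x assume "x \<in> g ` {0<..}"
    then obtain u where "u > 0" "x = g u" by auto
    then have "\<eta> * x > -1"
      using \<eta> a by (simp add: g_def)
    then show "x \<in> {-1/\<eta><..}"
      using \<eta> by (simp add: field_simps)
  next
    fix x assume "x \<in> {-1/\<eta><..}"
    then have "1 + \<eta> * x > 0"
      using \<eta> by (simp add: field_simps)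
    then have "a / (1 + \<eta> * x) > 0 \<and> g (a / (1 + \<eta> * x)) = x"
      using \<eta> a by (simp add: g_def field_simps)
    then show "x \<in> g ` {0<..}" by force
  qed
  moreover have "inj_on g {0<..}"
    using \<eta> a by (auto simp: inj_on_def g_def field_simps)
  moreover have "(g has_field_derivative - (a / (\<eta> * u\<^sup>2))) (at u within {0<..})" if "u > 0" for u
    using that \<eta> unfolding g_def
    by (auto intro!: derivative_eq_intros simp: field_simps power2_eq_square)
  moreover have "\<bar>- (a / (\<eta> * u\<^sup>2))\<bar> = a / (\<eta> * u\<^sup>2)" for u
    using \<eta> a by simp
  ultimately have cov: "?G absolutely_integrable_on {0<..} \<and> integral {0<..} ?G = b \<longleftrightarrow>
      F absolutely_integrable_on {-1/\<eta><..} \<and> integral {-1/\<eta><..} F = b" for b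
    using has_absolute_integral_change_of_variables_1'[of "{0<..}" g "\<lambda>u. - (a / (\<eta> * u\<^sup>2))" F b]
    by auto
  have F_zero': "F x = 0" if "x \<notin> {-1/\<eta><..}" for x
    using that F_zero by simp
  have L: "integrable lborel F \<longleftrightarrow> F absolutely_integrable_on {-1/\<eta><..}"
    using integrable_lborel_iff_absolutely_integrable_on[OF F F_zero'] .
  show "integrable lborel F \<longleftrightarrow> ?G absolutely_integrable_on {0<..}"
    unfolding L using cov by blast
  assume F_int: "integrable lborel F"
  then have "integral {0<..} ?G = integral {-1/\<eta><..} F"
    using cov L by blast
  moreover have "(\<integral>x. F x \<partial>lborel) = integral {-1/\<eta><..} F"
    using integral_lborel_eq_integral_on[OF F_int F_zero'] .
  ultimately show "(\<integral>x. F x \<partial>lborel) = integral {0<..} ?G"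
    by simp
qed

lemma borel_measurable_p_inf [measurable]: "p_inf \<eta> \<in> borel_measurable borel"
  unfolding p_inf_def by measurable

lemma p_inf_reciprocal_substitution:
  fixes \<eta> u :: real
  assumes \<eta>: "\<eta> > 0" and u: "u > 0"
  defines "a \<equiv> 2 / \<eta>\<^sup>2"
  shows "a / (\<eta> * u\<^sup>2) * p_inf \<eta> ((a/u - 1) / \<eta>) = u powr a * exp (-u) / Gamma (a + 1)"
proof -
  have a: "a > 0"
    using \<eta> by (simp add: a_def)
  have x: "1 + \<eta> * ((a/u - 1) / \<eta>) = a / u"
    using \<eta> by simp
  then have "(a/u - 1) / \<eta> > - 1 / \<eta>"
    using \<eta> a u by (simp add: field_simps)
  moreover have a_eq: "2 / \<eta>\<^sup>2 = a" "4 / \<eta>\<^sup>2 = 2 * a"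
    by (simp_all add: a_def)
  ultimately have p: "p_inf \<eta> ((a/u - 1) / \<eta>) =
      2 powr a * \<eta> powr (1 - 2 * a) / Gamma a * exp (-u) * (a / u) powr (-2 - a)"
    unfolding p_inf_def x using a u by (simp add: a_eq)
  have "a powr a = (2 / \<eta>\<^sup>2) powr a"
    by (simp only: a_def)
  also have "\<dots> = 2 powr a / (\<eta> powr 2) powr a"
    using \<eta> by (simp add: powr_divide powr_realpow)
  finally have a_powr: "a powr a = 2 powr a / \<eta> powr (2 * a)"
    by (simp add: powr_powr)
  have \<eta>_powr: "\<eta> powr (1 - 2 * a) = \<eta> / \<eta> powr (2 * a)"
    using \<eta> by (simp add: powr_diff)
  have "(a / u) powr (-2 - a) = (a / u) powr (- (2 + a))"
    by simp
  also have "\<dots> = inverse (a / u) powr (2 + a)"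
    by (simp only: powr_minus inverse_powr)
  also have "\<dots> = (u / a) powr 2 * (u / a) powr a"
    by (simp add: powr_add)
  also have "\<dots> = u\<^sup>2 * u powr a / (a\<^sup>2 * a powr a)"
    using a u by (simp add: powr_divide power_divide)
  finally have au_powr: "(a / u) powr (-2 - a) = u\<^sup>2 * u powr a / (a\<^sup>2 * a powr a)" .
  show ?thesis
    unfolding p au_powr \<eta>_powr Gamma_real_plus1[OF a] a_powr
    using \<eta> a u Gamma_real_pos[OF a] by (simp add: field_simps power2_eq_square)
qed

lemma
  fixes \<phi> h :: "real \<Rightarrow> real" and \<eta> :: real
  assumes \<eta>: "\<eta> > 0" and \<phi>: "\<phi> \<in> borel_measurable borel"
  defines "a \<equiv> 2 / \<eta>\<^sup>2"
  assumes h: "\<And>u. u > 0 \<Longrightarrow> h u = \<phi> ((a/u - 1) / \<eta>) * (u powr a * exp (-u) / Gamma (a + 1))"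
  shows integrable_mult_p_inf_iff:
      "integrable lborel (\<lambda>x. \<phi> x * p_inf \<eta> x) \<longleftrightarrow> h absolutely_integrable_on {0<..}"
    and integral_mult_p_inf:
      "h absolutely_integrable_on {0<..} \<Longrightarrow> (\<integral>x. \<phi> x * p_inf \<eta> x \<partial>lborel) = integral {0<..} h"
proof -
  have a: "a > 0"
    using \<eta> by (simp add: a_def)
  let ?F = "\<lambda>x. \<phi> x * p_inf \<eta> x"
  have F: "?F \<in> borel_measurable borel"
    using \<phi> by measurable
  have F_zero: "?F x = 0" if "x \<le> -1/\<eta>" for x
    using that by (simp add: p_inf_def)
  have G_eq_h: "a / (\<eta> * u\<^sup>2) * ?F ((a/u - 1) / \<eta>) = h u" if "u \<in> {0<..}" for u
  proof -
    have "a / (\<eta> * u\<^sup>2) * ?F ((a/u - 1) / \<eta>) =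
        \<phi> ((a/u - 1) / \<eta>) * (a / (\<eta> * u\<^sup>2) * p_inf \<eta> ((a/u - 1) / \<eta>))"
      by (simp add: ac_simps)
    also have "\<dots> = h u"
      using that by (simp only: greaterThan_iff h p_inf_reciprocal_substitution[OF \<eta>, folded a_def])
    finally show ?thesis .
  qed
  have "integrable lborel ?F \<longleftrightarrow>
      (\<lambda>u. a / (\<eta> * u\<^sup>2) * ?F ((a/u - 1) / \<eta>)) absolutely_integrable_on {0<..}"
    using integrable_lborel_reciprocal_substitution[OF \<eta> a F F_zero] .
  also have "\<dots> \<longleftrightarrow> h absolutely_integrable_on {0<..}"
    by (rule absolutely_integrable_spike_eq[of "{}"]) (use G_eq_h in auto)
  finally show int_iff: "integrable lborel ?F \<longleftrightarrow> h absolutely_integrable_on {0<..}" .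
  assume "h absolutely_integrable_on {0<..}"
  then have "(\<integral>x. ?F x \<partial>lborel) = integral {0<..} (\<lambda>u. a / (\<eta> * u\<^sup>2) * ?F ((a/u - 1) / \<eta>))"
    using integral_lborel_reciprocal_substitution[OF \<eta> a F F_zero] int_iff by blast
  also have "\<dots> = integral {0<..} h"
    by (rule integral_cong) (use G_eq_h in auto)
  finally show "(\<integral>x. ?F x \<partial>lborel) = integral {0<..} h" .
qed

lemma not_integrable_on_inverse_at_0:
  fixes \<delta> :: real
  assumes "\<delta> > 0"
  shows "\<not> (\<lambda>u. 1 / u) integrable_on {0<..\<delta>}"
proof
  assume int: "(\<lambda>u. 1 / u) integrable_on {0<..\<delta>}"
  define I where "I = integral {0<..\<delta>} (\<lambda>u. 1 / u)"
  define \<epsilon> where "\<epsilon> = \<delta> * exp (- (\<bar>I\<bar> + 1))"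
  have \<epsilon>: "0 < \<epsilon>" "\<epsilon> \<le> \<delta>"
    using assms by (auto simp: \<epsilon>_def)
  have FTC: "((\<lambda>u. 1 / u) has_integral (ln \<delta> - ln \<epsilon>)) {\<epsilon>..\<delta>}"
    using \<epsilon> by (intro fundamental_theorem_of_calculus)
      (auto intro!: derivative_eq_intros simp flip: has_real_derivative_iff_has_vector_derivative
        simp: field_simps)
  then have "ln \<delta> - ln \<epsilon> = integral {\<epsilon>..\<delta>} (\<lambda>u. 1 / u)"
    by (simp add: integral_unique)
  also have "\<dots> \<le> I"
    unfolding I_def using \<epsilon> int has_integral_integrable[OF FTC]
    by (intro integral_subset_le) auto
  moreover have "ln \<delta> - ln \<epsilon> = \<bar>I\<bar> + 1"
    using assms by (simp add: \<epsilon>_def ln_mult)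
  ultimately show False
    by linarith
qed

lemma absolutely_integrable_moment_integrand:
  fixes a :: real and k :: nat
  assumes a: "a > 0" and k: "real k - 1 < a"
  shows "(\<lambda>u. \<bar>a - u\<bar> ^ k * u powr (a - k) * exp (-u)) absolutely_integrable_on {0<..}"
proof (rule measurable_bounded_by_integrable_imp_absolutely_integrable)
  show "(\<lambda>u. \<bar>a - u\<bar> ^ k * u powr (a - k) * exp (-u)) \<in> borel_measurable (lebesgue_on {0<..})"
    by (rule continuous_imp_measurable_on_sets_lebesgue) (auto intro!: continuous_intros)
  show "{0<..} \<in> sets (lebesgue :: real measure)"
    by simp
  let ?B = "\<lambda>u. 2 ^ k * (a ^ k * (u powr (a - k) * exp (-u)) + u powr a * exp (-u))"
  have "(\<lambda>u. u powr (a - k) * exp (-u)) integrable_on {0<..}"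
    using Gamma_integral_real'[of "a - k + 1"] k by (auto simp: has_integral_integrable)
  moreover have "(\<lambda>u. u powr a * exp (-u)) integrable_on {0<..}"
    using Gamma_integral_real'[of "a + 1"] a by (auto simp: has_integral_integrable)
  ultimately show "?B integrable_on {0<..}"
    using a by (simp add: integrable_add)
  show "norm (\<bar>a - u\<bar> ^ k * u powr (a - k) * exp (-u)) \<le> ?B u" if "u \<in> {0<..}" for u
  proof -
    have u: "u > 0"
      using that by simp
    have "\<bar>a - u\<bar> ^ k \<le> (2 * max a u) ^ k"
      by (rule power_mono) (use a u in auto)
    also have "\<dots> \<le> 2 ^ k * (a ^ k + u ^ k)"
      using a u by (auto simp: power_mult_distrib max_def)
    finally have "\<bar>a - u\<bar> ^ k * (u powr (a - k) * exp (-u)) \<le>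
        2 ^ k * (a ^ k + u ^ k) * (u powr (a - k) * exp (-u))"
      by (rule mult_right_mono) simp
    also have "\<dots> = ?B u"
      using u by (simp add: powr_diff powr_realpow algebra_simps)
    finally show ?thesis
      by (simp add: mult.assoc)
  qed
qed

lemma not_absolutely_integrable_moment_integrand:
  fixes a :: real and k :: nat
  assumes a: "a > 0" and k: "a \<le> real k - 1"
  shows "\<not> (\<lambda>u. \<bar>a - u\<bar> ^ k * u powr (a - k) * exp (-u)) absolutely_integrable_on {0<..}"
proof
  let ?q = "\<lambda>u. \<bar>a - u\<bar> ^ k * u powr (a - k) * exp (-u)"
  assume "?q absolutely_integrable_on {0<..}"
  define \<delta> where "\<delta> = min 1 (a / 2)"
  define c where "c = (a / 2) ^ k * exp (-1)"
  have \<delta>: "\<delta> > 0"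
    using a by (simp add: \<delta>_def)
  have c: "c > 0"
    using a by (simp add: c_def)
  have "?q absolutely_integrable_on {0<..\<delta>}"
    using \<open>?q absolutely_integrable_on {0<..}\<close> unfolding set_integrable_def[symmetric]
    by (rule set_integrable_subset) auto
  then have q_int: "(\<lambda>u. ?q u / c) integrable_on {0<..\<delta>}"
    using c set_lebesgue_integral_eq_integral(1) by auto
  have "norm (1 / u) \<le> ?q u / c" if "u \<in> {0<..\<delta>}" for u
  proof -
    have u: "0 < u" "u \<le> 1" "u \<le> a / 2"
      using that by (auto simp: \<delta>_def)
    have "(a / 2) ^ k \<le> \<bar>a - u\<bar> ^ k"
      by (rule power_mono) (use u a in auto)
    moreover have "u powr (-1) \<le> u powr (a - k)"
      by (rule powr_mono') (use u k in auto)
    moreover have "exp (-1) \<le> exp (-u)"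
      using u by simp
    ultimately have "(a / 2) ^ k * u powr (-1) * exp (-1) \<le> ?q u"
      by (intro mult_mono) auto
    then show ?thesis
      unfolding c_def
      using u c by (simp add: powr_minus_divide field_simps)
  qed
  then have "(\<lambda>u. 1 / u) absolutely_integrable_on {0<..\<delta>}"
    by (intro measurable_bounded_by_integrable_imp_absolutely_integrable[OF _ _ q_int])
      (auto intro!: continuous_imp_measurable_on_sets_lebesgue continuous_intros)
  then show False
    using not_integrable_on_inverse_at_0[OF \<delta>] set_lebesgue_integral_eq_integral(1) by blast
qed

lemma integrable_abs_power_p_inf_iff:
  fixes \<eta> :: real and k :: nat
  assumes \<eta>: "\<eta> > 0"
  shows "integrable lborel (\<lambda>x. \<bar>x\<bar> ^ k * p_inf \<eta> x) \<longleftrightarrow> real k - 1 < 2 / \<eta>\<^sup>2"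
proof -
  define a where "a = 2 / \<eta>\<^sup>2"
  have a: "a > 0"
    using \<eta> by (simp add: a_def)
  define C where "C = 1 / (\<eta> ^ k * Gamma (a + 1))"
  have "Gamma (a + 1) > 0"
    using a by simp
  then have "C \<noteq> 0"
    using \<eta> by (simp add: C_def)
  let ?q = "\<lambda>u. \<bar>a - u\<bar> ^ k * u powr (a - k) * exp (-u)"
  have "integrable lborel (\<lambda>x. \<bar>x\<bar> ^ k * p_inf \<eta> x) \<longleftrightarrow>
      (\<lambda>u. C * ?q u) absolutely_integrable_on {0<..}"
  proof (rule integrable_mult_p_inf_iff[OF \<eta>, folded a_def])
    fix u :: real
    assume u: "u > 0"
    have "(a/u - 1) / \<eta> = (a - u) / (\<eta> * u)"
      using u \<eta> by (simp add: field_simps)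
    then have "\<bar>(a/u - 1) / \<eta>\<bar> ^ k = \<bar>a - u\<bar> ^ k / (\<eta> ^ k * u ^ k)"
      using u \<eta> by (simp add: abs_mult power_divide power_mult_distrib)
    moreover have "u powr a = u ^ k * u powr (a - k)"
      using u by (simp add: powr_diff powr_realpow)
    ultimately show "C * ?q u = \<bar>(a/u - 1) / \<eta>\<bar> ^ k * (u powr a * exp (-u) / Gamma (a + 1))"
      using u \<eta> by (simp add: C_def field_simps)
  qed simp
  also have "\<dots> \<longleftrightarrow> ?q absolutely_integrable_on {0<..}"
    using \<open>C \<noteq> 0\<close> by (rule set_integrable_mult_right_iff)
  also have "\<dots> \<longleftrightarrow> real k - 1 < a"
    using absolutely_integrable_moment_integrand[OF a] not_absolutely_integrable_moment_integrand[OF a]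
    by (meson not_less)
  finally show ?thesis
    by (simp add: a_def)
qed

lemma p_inf_first_moment:
  fixes \<eta> :: real
  assumes \<eta>: "\<eta> > 0"
  shows "(\<integral>x. x * p_inf \<eta> x \<partial>lborel) = 0"
proof -
  define a where "a = 2 / \<eta>\<^sup>2"
  have a: "a > 0"
    using \<eta> by (simp add: a_def)
  define C where "C = 1 / (\<eta> * Gamma (a + 1))"
  let ?h = "\<lambda>u. C * (a * (u powr (a - 1) * exp (-u)) - u powr ((a + 1) - 1) * exp (-u))"
  have h_int: "?h absolutely_integrable_on {0<..}"
    using a by (intro set_integrable_mult_right set_integral_diff(1) absolutely_integrable_Gamma_integral_real) auto
  have "(\<integral>x. x * p_inf \<eta> x \<partial>lborel) = integral {0<..} ?h"
  proof (rule integral_mult_p_inf[OF \<eta> _ _ h_int, folded a_def])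
    fix u :: real
    assume u: "u > 0"
    then have p: "u powr (a - 1) = u powr a / u"
      by (simp add: powr_diff)
    show "?h u = (a/u - 1) / \<eta> * (u powr a * exp (-u) / Gamma (a + 1))"
      unfolding C_def p using u \<eta> by (simp add: field_simps)
  qed simp
  also have "\<dots> = C * (a * Gamma a - Gamma (a + 1))"
    using a by (intro integral_unique has_integral_mult_right has_integral_diff Gamma_integral_real') auto
  also have "\<dots> = 0"
    using a by (simp add: Gamma_real_plus1)
  finally show ?thesis .
qed

lemma p_inf_second_moment:
  fixes \<eta> :: real
  assumes \<eta>: "\<eta> > 0" and "\<eta>\<^sup>2 < 2"
  shows "(\<integral>x. x\<^sup>2 * p_inf \<eta> x \<partial>lborel) = 1 / (2 - \<eta>\<^sup>2)"
proof -
  define a where "a = 2 / \<eta>\<^sup>2"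
  have a: "a > 1"
    using assms by (simp add: a_def field_simps)
  define C where "C = 1 / (\<eta>\<^sup>2 * Gamma (a + 1))"
  let ?h = "\<lambda>u. C * (a\<^sup>2 * (u powr ((a - 1) - 1) * exp (-u)) - 2 * a * (u powr (a - 1) * exp (-u))
      + u powr ((a + 1) - 1) * exp (-u))"
  have h_int: "?h absolutely_integrable_on {0<..}"
    using a by (intro set_integrable_mult_right set_integral_add set_integral_diff(1)
      absolutely_integrable_Gamma_integral_real) auto
  have "(\<integral>x. x\<^sup>2 * p_inf \<eta> x \<partial>lborel) = integral {0<..} ?h"
  proof (rule integral_mult_p_inf[OF \<eta> _ _ h_int, folded a_def])
    fix u :: real
    assume u: "u > 0"
    then have p1: "u powr (a - 1) = u powr a / u" and p2: "u powr ((a - 1) - 1) = u powr a / u\<^sup>2"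
      by (simp_all add: powr_diff powr_numeral)
    show "?h u = ((a/u - 1) / \<eta>)\<^sup>2 * (u powr a * exp (-u) / Gamma (a + 1))"
      unfolding C_def p1 p2 using u \<eta> by (simp add: field_simps power2_eq_square)
  qed simp
  also have "\<dots> = C * (a\<^sup>2 * Gamma (a - 1) - 2 * a * Gamma a + Gamma (a + 1))"
    using a by (intro integral_unique has_integral_mult_right has_integral_add has_integral_diff
      Gamma_integral_real') auto
  also have "\<dots> = 1 / (\<eta>\<^sup>2 * (a - 1))"
  proof -
    have Gamma_a: "Gamma a = (a - 1) * Gamma (a - 1)"
      using Gamma_real_plus1[of "a - 1"] a by simp
    then have Gamma_a1: "Gamma (a + 1) = a * ((a - 1) * Gamma (a - 1))"
      using a by (simp add: Gamma_real_plus1)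
    have "Gamma (a - 1) \<noteq> 0"
      using a Gamma_real_pos[of "a - 1"] by linarith
    then show ?thesis
      unfolding C_def Gamma_a1 Gamma_a using \<eta> a by (simp add: field_simps power2_eq_square)
  qed
  also have "\<dots> = 1 / (2 - \<eta>\<^sup>2)"
    using \<eta> by (simp add: a_def algebra_simps)
  finally show ?thesis .
qed

theorem mainTheorem2:
  fixes \<eta> :: real
  assumes "\<eta> > 0"
  shows "(\<forall>k::nat. k \<ge> 1 \<longrightarrow>
            (integrable lborel (\<lambda>x. \<bar>x\<bar> ^ k * p_inf \<eta> x)
             \<longleftrightarrow> (k = 1 \<or> \<eta> < sqrt (2 / (real k - 1)))))
       \<and> (\<integral>x. x * p_inf \<eta> x \<partial>lborel) = 0
       \<and> (\<eta>\<^sup>2 < 2 \<longrightarrow> (\<integral>x. x\<^sup>2 * p_inf \<eta> x \<partial>lborel) = 1 / (2 - \<eta>\<^sup>2))"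
proof (intro conjI allI impI)
  fix k :: nat
  assume "k \<ge> 1"
  have "(k = 1 \<or> \<eta> < sqrt (2 / (real k - 1))) \<longleftrightarrow> real k - 1 < 2 / \<eta>\<^sup>2"
  proof (cases "k = 1")
    case False
    then have "real k - 1 > 0"
      using \<open>k \<ge> 1\<close> by simp
    have "\<eta> < sqrt (2 / (real k - 1)) \<longleftrightarrow> sqrt (\<eta>\<^sup>2) < sqrt (2 / (real k - 1))"
      using assms by simp
    also have "\<dots> \<longleftrightarrow> \<eta>\<^sup>2 < 2 / (real k - 1)"
      by (rule real_sqrt_less_iff)
    also have "\<dots> \<longleftrightarrow> real k - 1 < 2 / \<eta>\<^sup>2"
      using \<open>real k - 1 > 0\<close> assms by (simp add: field_simps)
    finally show ?thesis
      using False by simp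
  qed (use assms in simp)
  then show "integrable lborel (\<lambda>x. \<bar>x\<bar> ^ k * p_inf \<eta> x) \<longleftrightarrow> (k = 1 \<or> \<eta> < sqrt (2 / (real k - 1)))"
    using integrable_abs_power_p_inf_iff[OF assms] by simp
qed (use assms p_inf_first_moment p_inf_second_moment in auto)

end
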